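(* Under Strategy 1 (described in the context), for an attack cycle $\omega$ let $\Delta(\omega)=\sum_{\mathfrak b}\delta(\mathfrak b)$, the sum over all uncles $\mathfrak b$ created in $\omega$ that are referred, where $\delta(\mathfrak b)$ is the distance between $\mathfrak b$ and its nephew. Then $$\mathbb{E}[\Delta]=pq+\frac{pq^2\gamma}{(p-q)^2}\Bigl(2p-q-\bigl(p+n_1(p-q)\bigr)\Bigl(\frac qp\Bigr)^{n_1-1}\Bigr)+\frac{(1-\gamma)q}{p}\Bigl(q(1+p)-(1+n_1p)q^{n_1}\Bigr).$$
   Context: Honest hashrate $p$, attacker hashrate $q$, $p+q=1$, $0<q<p$; $\gamma\in[0,1]$ is the fraction of honest hashrate mining on the attacker's block during a public competition between equal-height blocks. Attack cycles are i.i.d. words in S (attacker block) and H (honest block): H, SHS, SHH, or SSwH with $w$ a Dyck word; $\mathbb{P}[H]=p$, $\mathbb{P}[SHS]=pq^2$, $\mathbb{P}[SHH]=p^2q$, $\mathbb{P}[SSwH]=q^2p(pq)^{|w|}$ ($|w|$ half the length of $w$). Ethereum rules: an uncle is a non-official block whose parent is official; a nephew (official block) may refer an uncle at distance (height difference) at most $n_1$ ($n_1\ge2$ an integer). Strategy 1: the attacker withholds his blocks, and each time the honest miners publish a block he publishes the part of his secret fork of the same height as the public honest chain (a fraction $\gamma$ of honest hashrate then mines on the attacker's branch); the attacker's fork wins in cycles starting with SS; all miners refer all possible uncles. *)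

theory Defs
  imports "HOL-Analysis.Analysis"
begin

datatype letter = S | H

fun dyck_aux :: "nat \<Rightarrow> letter list \<Rightarrow> bool" where
  "dyck_aux n [] = (n = 0)"
| "dyck_aux n (S # w) = dyck_aux (Suc n) w"
| "dyck_aux 0 (H # w) = False"
| "dyck_aux (Suc n) (H # w) = dyck_aux n w"

definition dyck :: "letter list \<Rightarrow> bool" where
  "dyck w = dyck_aux 0 w"

definition word_prob :: "real \<Rightarrow> real \<Rightarrow> letter list \<Rightarrow> real" where
  "word_prob p q w =
     (if w = [H] then p
      else if w = [S, H, S] then p * q^2
      else if w = [S, H, H] then p^2 * q
      else if (\<exists>v. dyck v \<and> w = [S, S] @ v @ [H]) then q^2 * p * (p * q) ^ ((length w - 3) div 2)
      else 0)"

text \<open>Att: the attacker mines a block (always on top of his own fork);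
  HonH: an honest miner mines on the tip of the honest branch;
  HonA: an honest miner (fraction gamma of honest hashrate during a competition) mines on the
  attacker's published block of the same height as the public honest chain.\<close>
datatype event = Att | HonH | HonA

fun letter_of :: "event \<Rightarrow> letter" where
  "letter_of Att = S"
| "letter_of HonH = H"
| "letter_of HonA = H"

definition is_honest :: "event \<Rightarrow> bool" where
  "is_honest e \<longleftrightarrow> e \<noteq> Att"

text \<open>The first honest block of a cycle is mined when there is no public competition (so it is
  on the honest tip); every later honest block of the cycle is mined during a competition and is
  on the attacker's branch with probability gamma, independently.\<close>
definition cycle_prob :: "real \<Rightarrow> real \<Rightarrow> real \<Rightarrow> event list \<Rightarrow> real" where
  "cycle_prob p q \<gamma> ev =
     (let hs = filter is_honest ev in
      if hs \<noteq> [] \<and> hd hs = HonH then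
        word_prob p q (map letter_of ev) *
        prod_list (map (\<lambda>e. if e = HonA then \<gamma> else 1 - \<gamma>) (tl hs))
      else 0)"

text \<open>Blocks of a cycle are indexed by their mining order 0,1,...; a block is (kind, height,
  parent), heights relative to the official block at the start of the cycle (height 0), and parent
  None means that starting block (which is official).\<close>
type_synonym block = "event \<times> nat \<times> nat option"

definition last_idx :: "(block \<Rightarrow> bool) \<Rightarrow> block list \<Rightarrow> nat option" where
  "last_idx P bs = (let js = filter (\<lambda>j. P (bs ! j)) [0..<length bs] in
                     if js = [] then None else Some (last js))"

definition hgt :: "block list \<Rightarrow> nat option \<Rightarrow> nat" where
  "hgt bs j = (case j of None \<Rightarrow> 0 | Some i \<Rightarrow> fst (snd (bs ! i)))"

definition atk_tip :: "block list \<Rightarrow> nat option" where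
  "atk_tip bs = last_idx (\<lambda>b. fst b = Att) bs"

definition hon_tip :: "block list \<Rightarrow> nat option" where
  "hon_tip bs = last_idx (\<lambda>b. fst b \<noteq> Att) bs"

definition atk_at :: "block list \<Rightarrow> nat \<Rightarrow> nat option" where
  "atk_at bs h = (if h = 0 then None else last_idx (\<lambda>b. fst b = Att \<and> fst (snd b) = h) bs)"

fun new_block :: "block list \<Rightarrow> event \<Rightarrow> block" where
  "new_block bs Att = (Att, Suc (hgt bs (atk_tip bs)), atk_tip bs)"
| "new_block bs HonH = (HonH, Suc (hgt bs (hon_tip bs)), hon_tip bs)"
| "new_block bs HonA =
     (let par = atk_at bs (hgt bs (hon_tip bs)) in (HonA, Suc (hgt bs par), par))"

fun build :: "block list \<Rightarrow> event list \<Rightarrow> block list" where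
  "build bs [] = bs"
| "build bs (e # es) = build (bs @ [new_block bs e]) es"

definition blocks :: "event list \<Rightarrow> block list" where
  "blocks ev = build [] ev"

fun chain :: "nat \<Rightarrow> block list \<Rightarrow> nat option \<Rightarrow> nat set" where
  "chain 0 bs j = {}"
| "chain (Suc n) bs None = {}"
| "chain (Suc n) bs (Some j) = insert j (chain n bs (snd (snd (bs ! j))))"

definition top_height :: "event list \<Rightarrow> nat" where
  "top_height ev = Max (insert 0 ((\<lambda>b. fst (snd b)) ` set (blocks ev)))"

text \<open>At the end of the cycle the longest chain (the one through the highest block) is official.\<close>
definition top_block :: "event list \<Rightarrow> nat option" where
  "top_block ev = last_idx (\<lambda>b. fst (snd b) = top_height ev) (blocks ev)"

definition official :: "event list \<Rightarrow> nat set" where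
  "official ev = chain (Suc (length ev)) (blocks ev) (top_block ev)"

definition bheight :: "event list \<Rightarrow> nat \<Rightarrow> nat" where
  "bheight ev j = fst (snd (blocks ev ! j))"

definition bparent :: "event list \<Rightarrow> nat \<Rightarrow> nat option" where
  "bparent ev j = snd (snd (blocks ev ! j))"

definition is_uncle :: "event list \<Rightarrow> nat \<Rightarrow> bool" where
  "is_uncle ev j \<longleftrightarrow> j < length ev \<and> j \<notin> official ev \<and>
     (case bparent ev j of None \<Rightarrow> True | Some i \<Rightarrow> i \<in> official ev)"

text \<open>Publication time: honest blocks are published immediately; an attacker block of height h is
  published when the honest chain reaches height h (or at the end of the cycle).\<close>
definition pub_time :: "event list \<Rightarrow> nat \<Rightarrow> nat" where
  "pub_time ev j =
     (if ev ! j \<noteq> Att then j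
      else (let ks = filter (\<lambda>k. ev ! k \<noteq> Att \<and> bheight ev k \<ge> bheight ev j) [0..<length ev] in
            if ks = [] then length ev else hd ks))"

text \<open>Height of the nephew: the first official block mined after the publication of the uncle; if
  there is none in the cycle, it is the first official block of the next cycle, at height
  top_height + 1.\<close>
definition nephew_height :: "event list \<Rightarrow> nat \<Rightarrow> nat" where
  "nephew_height ev j =
     (let ks = filter (\<lambda>k. k \<in> official ev \<and> k > pub_time ev j) [0..<length ev] in
      if ks = [] then Suc (top_height ev) else bheight ev (hd ks))"

definition dist :: "event list \<Rightarrow> nat \<Rightarrow> nat" where
  "dist ev j = nephew_height ev j - bheight ev j"

text \<open>Delta: sum of the distances of the uncles created in the cycle that are referred (distance
  at most n1).\<close>
definition Delta :: "nat \<Rightarrow> event list \<Rightarrow> nat" where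
  "Delta n1 ev = (\<Sum>j \<in> {j. is_uncle ev j \<and> dist ev j \<le> n1}. dist ev j)"

end

theory Submission
  imports Defs
begin

text \<open>A cycle won by the attacker, \<open>SSwH\<close> with \<open>w\<close> a Dyck word, is \<open>SS\<close> followed by the preorder
  (Lukasiewicz) word of a binary tree whose inner nodes are attacker blocks and whose leaves are
  honest blocks. In such a cycle the official chain consists of the attacker's blocks, the uncles
  are the first honest block and the honest blocks mined on the attacker's branch, and the
  distance of an honest block to its nephew is the attacker's lead when it is mined: \<open>2\<close> at the
  root, one more in a left subtree. Splitting trees at the root turns the expected sum of referred
  distances into linear recurrences in the lead whose coefficients involve the total weight of
  trees, which is \<open>1\<close>. Solving them downwards from the lead \<open>n\<^sub>1 + 1\<close>, beyond which nothing is
  referred, leaves sums of \<open>k x\<^sup>k\<^sup>-\<^sup>2\<close> over \<open>2 \<le> k \<le> n\<^sub>1\<close> with \<open>x = q\<close> and \<open>x = q / p\<close>, whose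
  closed forms give the formula; the short cycles \<open>SHS\<close> and \<open>SHH\<close> contribute \<open>p q\<close>.\<close>

lemma UNIV_event: "(UNIV::event set) = {Att, HonH, HonA}"
  using event.exhaust by auto

instance event :: finite
  by standard (simp add: UNIV_event)

section \<open>Sums over binary trees\<close>

datatype 'a btree = Leaf 'a | Node "'a btree" "'a btree"

fun depth :: "'a btree \<Rightarrow> nat" where
  "depth (Leaf a) = 0"
| "depth (Node l r) = Suc (max (depth l) (depth r))"

definition trees_upto :: "nat \<Rightarrow> 'a btree set" where
  "trees_upto n = {t. depth t \<le> n}"

lemma trees_upto_0: "trees_upto 0 = range Leaf"
  unfolding trees_upto_def by (auto elim: depth.elims)

lemma trees_upto_Suc:
  "trees_upto (Suc n) = range Leaf \<union> case_prod Node ` (trees_upto n \<times> trees_upto n)"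
proof (rule set_eqI)
  fix t :: "'a btree"
  show "t \<in> trees_upto (Suc n) \<longleftrightarrow> t \<in> range Leaf \<union> case_prod Node ` (trees_upto n \<times> trees_upto n)"
    by (cases t) (auto simp: trees_upto_def image_iff)
qed

lemma finite_trees_upto: "finite (trees_upto n :: 'a::finite btree set)"
  by (induction n) (simp_all add: trees_upto_0 trees_upto_Suc)

lemma finite_subset_trees_upto:
  assumes "finite F"
  obtains n where "F \<subseteq> trees_upto n"
  using assms by (intro that[of "Max (depth ` F)"]) (auto simp: trees_upto_def)

lemma sum_product_Times:
  fixes f :: "'a \<Rightarrow> 'c::comm_semiring_1" and g :: "'b \<Rightarrow> 'c"
  shows "(\<Sum>(a, b)\<in>A \<times> B. f a * g b) = sum f A * sum g B"
  by (simp add: sum_product sum.cartesian_product)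

lemma sum_trees_upto_0: "sum h (trees_upto 0) = (\<Sum>a\<in>UNIV. h (Leaf a))"
  by (simp add: trees_upto_0 sum.reindex inj_on_def)

lemma sum_trees_upto_Suc:
  fixes h :: "'a::finite btree \<Rightarrow> 'b::comm_monoid_add"
  shows "sum h (trees_upto (Suc n))
    = (\<Sum>a\<in>UNIV. h (Leaf a)) + (\<Sum>(l, r)\<in>trees_upto n \<times> trees_upto n. h (Node l r))"
proof -
  have "sum h (trees_upto (Suc n))
      = sum h (range Leaf) + sum h (case_prod Node ` (trees_upto n \<times> trees_upto n))"
    unfolding trees_upto_Suc by (rule sum.union_disjoint) (auto simp: finite_trees_upto)
  then show ?thesis
    by (simp add: sum.reindex inj_on_def case_prod_beta)
qed

lemma
  fixes h :: "'a::finite btree \<Rightarrow> real"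
  assumes nonneg: "\<And>t. 0 \<le> h t" and bounded: "\<And>n. sum h (trees_upto n) \<le> K"
  shows summable_on_btree_if_bounded: "h summable_on UNIV"
    and infsum_btree_le_if_bounded: "infsum h UNIV \<le> K"
proof -
  have finite_le: "sum h F \<le> K" if F: "finite F" for F
  proof -
    obtain n where "F \<subseteq> trees_upto n"
      using finite_subset_trees_upto[OF F] by blast
    then have "sum h F \<le> sum h (trees_upto n)"
      by (intro sum_mono2) (auto simp: finite_trees_upto nonneg)
    then show ?thesis
      using bounded[of n] by linarith
  qed
  show summable: "h summable_on UNIV"
    by (rule nonneg_bdd_above_summable_on) (use nonneg finite_le in \<open>auto intro!: bdd_aboveI2\<close>)
  show "infsum h UNIV \<le> K"
    by (rule infsum_le_finite_sums[OF summable]) (use finite_le in auto)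
qed

lemma infsum_btree:
  fixes h :: "'a::finite btree \<Rightarrow> 'b::banach"
  assumes summable: "h summable_on UNIV"
  shows "infsum h UNIV = (\<Sum>a\<in>UNIV. h (Leaf a)) + (\<Sum>\<^sub>\<infinity>(l, r)\<in>UNIV. h (Node l r))"
proof -
  have UNIV_btree: "UNIV = range Leaf \<union> range (case_prod Node)"
    by (auto intro: btree.exhaust)
  have "infsum h UNIV = infsum h (range Leaf) + infsum h (range (case_prod Node))"
    by (subst UNIV_btree, rule infsum_Un_disjoint)
       (auto intro: summable_on_subset_banach[OF summable])
  also have "infsum h (range Leaf) = (\<Sum>a\<in>UNIV. h (Leaf a))"
    by (simp add: sum.reindex inj_on_def)
  also have "infsum h (range (case_prod Node)) = (\<Sum>\<^sub>\<infinity>(l, r)\<in>UNIV. h (Node l r))"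
    by (subst infsum_reindex) (auto simp: inj_on_def comp_def case_prod_unfold)
  finally show ?thesis .
qed

lemma
  fixes f :: "'a \<Rightarrow> real" and g :: "'b \<Rightarrow> real"
  assumes f_nonneg: "\<And>x. 0 \<le> f x" and g_nonneg: "\<And>y. 0 \<le> g y"
    and f_summable: "f summable_on UNIV" and g_summable: "g summable_on UNIV"
  shows summable_on_product_nonneg: "(\<lambda>(x, y). f x * g y) summable_on UNIV"
    and infsum_product_nonneg: "(\<Sum>\<^sub>\<infinity>(x, y)\<in>UNIV. f x * g y) = infsum f UNIV * infsum g UNIV"
proof -
  have finite_le: "(\<Sum>(x, y)\<in>F. f x * g y) \<le> infsum f UNIV * infsum g UNIV" if "finite F" for F
  proof -
    have "(\<Sum>(x, y)\<in>F. f x * g y) \<le> (\<Sum>(x, y)\<in>fst ` F \<times> snd ` F. f x * g y)"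
      by (intro sum_mono2) (auto simp: that f_nonneg g_nonneg subset_fst_snd)
    also have "\<dots> = sum f (fst ` F) * sum g (snd ` F)"
      by (rule sum_product_Times)
    also have "\<dots> \<le> infsum f UNIV * infsum g UNIV"
      by (intro mult_mono finite_sum_le_infsum f_summable g_summable infsum_nonneg)
         (auto simp: that f_nonneg g_nonneg intro: sum_nonneg)
    finally show ?thesis .
  qed
  show summable: "(\<lambda>(x, y). f x * g y) summable_on UNIV"
    by (rule nonneg_bdd_above_summable_on)
       (use finite_le f_nonneg g_nonneg in \<open>auto intro!: bdd_aboveI2\<close>)
  have "(\<Sum>\<^sub>\<infinity>(x, y)\<in>UNIV. f x * g y) = (\<Sum>\<^sub>\<infinity>x\<in>UNIV. \<Sum>\<^sub>\<infinity>y\<in>UNIV. f x * g y)"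
    using infsum_Sigma'_banach[of "\<lambda>x y. f x * g y" UNIV "\<lambda>_. UNIV"] summable by simp
  also have "\<dots> = infsum f UNIV * infsum g UNIV"
    by (simp add: infsum_cmult_left' infsum_cmult_right')
  finally show "(\<Sum>\<^sub>\<infinity>(x, y)\<in>UNIV. f x * g y) = infsum f UNIV * infsum g UNIV" .
qed

section \<open>Expected uncle distance over trees\<close>

fun tree_word :: "event btree \<Rightarrow> event list" where
  "tree_word (Leaf e) = [e]"
| "tree_word (Node l r) = Att # tree_word l @ tree_word r"

fun leaves :: "'a btree \<Rightarrow> 'a list" where
  "leaves (Leaf a) = [a]"
| "leaves (Node l r) = leaves l @ leaves r"

fun inner_nodes :: "'a btree \<Rightarrow> nat" where
  "inner_nodes (Leaf a) = 0"
| "inner_nodes (Node l r) = Suc (inner_nodes l + inner_nodes r)"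

fun honest_tree :: "event btree \<Rightarrow> bool" where
  "honest_tree (Leaf e) \<longleftrightarrow> e \<noteq> Att"
| "honest_tree (Node l r) \<longleftrightarrow> honest_tree l \<and> honest_tree r"

definition leaf_weight :: "real \<Rightarrow> real \<Rightarrow> event \<Rightarrow> real" where
  "leaf_weight p \<gamma> e = (case e of Att \<Rightarrow> 0 | HonH \<Rightarrow> p * (1 - \<gamma>) | HonA \<Rightarrow> p * \<gamma>)"

text \<open>In \<open>tree_weight p q \<gamma> first t\<close> and \<open>uncle_dist_sum n\<^sub>1 first L t\<close>, the flag \<open>first\<close> marks the
  subtree containing the first honest block of the cycle, which is mined on the honest tip
  (weight \<open>p\<close>) and is an uncle; later honest blocks are uncles iff they are mined on the
  attacker's branch. \<open>L\<close> is the attacker's lead when the leftmost leaf is mined, which is the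
  distance of that block to its nephew.\<close>

fun tree_weight :: "real \<Rightarrow> real \<Rightarrow> real \<Rightarrow> bool \<Rightarrow> event btree \<Rightarrow> real" where
  "tree_weight p q \<gamma> first (Leaf e) =
     (if first then (if e = HonH then p else 0) else leaf_weight p \<gamma> e)"
| "tree_weight p q \<gamma> first (Node l r) = q * tree_weight p q \<gamma> first l * tree_weight p q \<gamma> False r"

fun uncle_dist_sum :: "nat \<Rightarrow> bool \<Rightarrow> nat \<Rightarrow> event btree \<Rightarrow> nat" where
  "uncle_dist_sum n\<^sub>1 first L (Leaf e) = (if (first \<or> e = HonA) \<and> L \<le> n\<^sub>1 then L else 0)"
| "uncle_dist_sum n\<^sub>1 first L (Node l r) =
     uncle_dist_sum n\<^sub>1 first (Suc L) l + uncle_dist_sum n\<^sub>1 False L r"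

definition total_weight :: "real \<Rightarrow> real \<Rightarrow> real \<Rightarrow> bool \<Rightarrow> real" where
  "total_weight p q \<gamma> first = infsum (tree_weight p q \<gamma> first) UNIV"

definition mean_uncle_dist :: "real \<Rightarrow> real \<Rightarrow> real \<Rightarrow> nat \<Rightarrow> bool \<Rightarrow> nat \<Rightarrow> real" where
  "mean_uncle_dist p q \<gamma> n\<^sub>1 first L =
     (\<Sum>\<^sub>\<infinity>t\<in>UNIV. tree_weight p q \<gamma> first t * real (uncle_dist_sum n\<^sub>1 first L t))"

definition weighted_power_sum :: "real \<Rightarrow> nat \<Rightarrow> nat \<Rightarrow> real" where
  "weighted_power_sum x L n = (\<Sum>k=L..n. real k * x ^ (k - L))"

lemma weighted_power_sum_eq_0: "n < L \<Longrightarrow> weighted_power_sum x L n = 0"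
  by (simp add: weighted_power_sum_def)

lemma weighted_power_sum_rec:
  assumes "L \<le> n"
  shows "weighted_power_sum x L n = real L + x * weighted_power_sum x (Suc L) n"
proof -
  have "(\<Sum>k=Suc L..n. real k * x ^ (k - L)) = x * (\<Sum>k=Suc L..n. real k * x ^ (k - Suc L))"
    unfolding sum_distrib_left by (rule sum.cong) (auto simp: Suc_diff_Suc simp flip: power_Suc)
  then show ?thesis
    using assms by (simp add: weighted_power_sum_def sum.atLeast_Suc_atMost)
qed

lemma weighted_power_sum_closed_form:
  "(1 - x)\<^sup>2 * weighted_power_sum x 2 (Suc m)
     = 2 - x - (real m + 2) * x ^ m + (real m + 1) * x ^ Suc m"
proof (induction m)
  case 0
  then show ?case by (simp add: weighted_power_sum_def)
next
  case (Suc m)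
  have "weighted_power_sum x 2 (Suc (Suc m)) = weighted_power_sum x 2 (Suc m) + (real m + 2) * x ^ m"
    by (simp add: weighted_power_sum_def sum.cl_ivl_Suc)
  then show ?case
    using Suc.IH by (simp add: distrib_left power2_eq_square algebra_simps)
qed

context
  fixes p q \<gamma> :: real and n\<^sub>1 :: nat
  assumes q_pos: "0 < q" and q_less_p: "q < p" and p_plus_q: "p + q = 1"
    and \<gamma>_nonneg: "0 \<le> \<gamma>" and \<gamma>_le_1: "\<gamma> \<le> 1"
begin

lemma tree_weight_nonneg: "0 \<le> tree_weight p q \<gamma> first t"
proof (induction t arbitrary: first)
  case (Leaf e)
  then show ?case
    using q_pos q_less_p \<gamma>_nonneg \<gamma>_le_1 by (cases e) (auto simp: leaf_weight_def)
qed (use q_pos in auto)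

lemma sum_tree_weight_Leaf: "(\<Sum>e\<in>UNIV. tree_weight p q \<gamma> first (Leaf e)) = p"
  by (cases first) (auto simp: UNIV_event leaf_weight_def algebra_simps)

lemma sum_mean_uncle_dist_Leaf:
  "(\<Sum>e\<in>UNIV. tree_weight p q \<gamma> first (Leaf e) * real (uncle_dist_sum n\<^sub>1 first L (Leaf e)))
     = (if first then p else p * \<gamma>) * (if L \<le> n\<^sub>1 then real L else 0)"
  by (cases first) (auto simp: UNIV_event leaf_weight_def algebra_simps)

lemma uncle_dist_sum_eq_0: "n\<^sub>1 < L \<Longrightarrow> uncle_dist_sum n\<^sub>1 first L t = 0"
  by (induction t arbitrary: first L) auto

lemma sum_tree_weight_le_1: "sum (tree_weight p q \<gamma> first) (trees_upto n) \<le> 1"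
proof (induction n arbitrary: first)
  case 0
  then show ?case
    using sum_tree_weight_Leaf[of first] p_plus_q q_pos
    by (simp add: sum_trees_upto_0 del: tree_weight.simps)
next
  case (Suc n)
  let ?w = "tree_weight p q \<gamma>"
  have "(\<Sum>(l, r)\<in>trees_upto n \<times> trees_upto n. ?w first (Node l r))
      = q * (sum (?w first) (trees_upto n) * sum (?w False) (trees_upto n))"
    using sum_product_Times[of "\<lambda>l. q * ?w first l" "?w False"]
    by (simp add: sum_distrib_left[symmetric] mult.assoc)
  also have "\<dots> \<le> q"
    using Suc.IH q_pos by (intro mult_left_le mult_le_one sum_nonneg tree_weight_nonneg) auto
  finally show ?case
    using sum_tree_weight_Leaf[of first] p_plus_q
    by (simp add: sum_trees_upto_Suc del: tree_weight.simps)
qed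

text \<open>The bound \<open>K\<close> is the fixed point of \<open>K = p n\<^sub>1 + 2 q K\<close>, which the
  decomposition at the root preserves.\<close>
lemma sum_uncle_dist_le:
  "(\<Sum>t\<in>trees_upto n. tree_weight p q \<gamma> first t * real (uncle_dist_sum n\<^sub>1 first L t))
     \<le> p * n\<^sub>1 / (p - q)"
proof -
  define K where "K = p * n\<^sub>1 / (p - q)"
  have K_fixed: "p * n\<^sub>1 + 2 * q * K = K"
  proof -
    have "K * (p - q) = p * n\<^sub>1"
      using q_less_p by (simp add: K_def)
    moreover have "K = K * (p + q)"
      using p_plus_q by simp
    ultimately show ?thesis
      by (simp add: algebra_simps)
  qed
  have K_nonneg: "0 \<le> K"
    using q_less_p q_pos by (simp add: K_def)
  let ?w = "tree_weight p q \<gamma>" and ?d = "uncle_dist_sum n\<^sub>1"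
  have leaves_le: "(\<Sum>e\<in>UNIV. ?w first (Leaf e) * real (?d first L (Leaf e))) \<le> p * n\<^sub>1"
    for first L
  proof -
    have "(\<Sum>e\<in>UNIV. ?w first (Leaf e) * real (?d first L (Leaf e))) \<le> (\<Sum>e\<in>UNIV. ?w first (Leaf e) * n\<^sub>1)"
      by (intro sum_mono mult_left_mono) (auto simp: tree_weight_nonneg simp del: tree_weight.simps)
    also have "\<dots> = p * n\<^sub>1"
      using sum_tree_weight_Leaf[of first] by (simp add: sum_distrib_right[symmetric] del: tree_weight.simps)
    finally show ?thesis .
  qed
  have "(\<Sum>t\<in>trees_upto n. ?w first t * real (?d first L t)) \<le> K"
  proof (induction n arbitrary: first L)
    case 0
    show ?case
      unfolding sum_trees_upto_0 using leaves_le[of first L] K_fixed K_nonneg q_pos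
      by (smt (verit) mult_nonneg_nonneg)
  next
    case (Suc n)
    have "(\<Sum>(l, r)\<in>trees_upto n \<times> trees_upto n. ?w first (Node l r) * real (?d first L (Node l r)))
       = (\<Sum>(l, r)\<in>trees_upto n \<times> trees_upto n. (q * (?w first l * real (?d first (Suc L) l))) * ?w False r)
       + (\<Sum>(l, r)\<in>trees_upto n \<times> trees_upto n. (q * ?w first l) * (?w False r * real (?d False L r)))"
      by (subst sum.distrib[symmetric]) (auto intro!: sum.cong simp: algebra_simps)
    also have "\<dots> = q * ((\<Sum>l\<in>trees_upto n. ?w first l * real (?d first (Suc L) l)) * sum (?w False) (trees_upto n))
       + q * (sum (?w first) (trees_upto n) * (\<Sum>r\<in>trees_upto n. ?w False r * real (?d False L r)))"
      unfolding sum_product_Times sum_distrib_left[symmetric] by (simp add: mult.assoc)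
    also have "\<dots> \<le> q * (K * 1) + q * (1 * K)"
      using Suc.IH q_pos sum_tree_weight_le_1 K_nonneg
      by (intro add_mono mult_left_mono mult_mono)
         (auto intro!: sum_nonneg mult_nonneg_nonneg tree_weight_nonneg)
    finally show ?case
      unfolding sum_trees_upto_Suc using leaves_le[of first L] K_fixed by linarith
  qed
  then show ?thesis
    by (simp add: K_def)
qed

lemma summable_tree_weight: "tree_weight p q \<gamma> first summable_on UNIV"
  and total_weight_le_1: "total_weight p q \<gamma> first \<le> 1"
  using summable_on_btree_if_bounded infsum_btree_le_if_bounded
    tree_weight_nonneg sum_tree_weight_le_1 unfolding total_weight_def by blast+

lemma summable_uncle_dist:
  "(\<lambda>t. tree_weight p q \<gamma> first t * real (uncle_dist_sum n\<^sub>1 first L t)) summable_on UNIV"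
  by (rule summable_on_btree_if_bounded[OF _ sum_uncle_dist_le]) (simp add: tree_weight_nonneg)

lemma total_weight_rec:
  "total_weight p q \<gamma> first = p + q * (total_weight p q \<gamma> first * total_weight p q \<gamma> False)"
proof -
  let ?w = "tree_weight p q \<gamma>"
  have "total_weight p q \<gamma> first = (\<Sum>e\<in>UNIV. ?w first (Leaf e)) + (\<Sum>\<^sub>\<infinity>(l, r)\<in>UNIV. ?w first (Node l r))"
    unfolding total_weight_def by (rule infsum_btree[OF summable_tree_weight])
  also have "(\<Sum>e\<in>UNIV. ?w first (Leaf e)) = p"
    by (rule sum_tree_weight_Leaf)
  also have "(\<Sum>\<^sub>\<infinity>(l, r)\<in>UNIV. ?w first (Node l r)) = q * (\<Sum>\<^sub>\<infinity>(l, r)\<in>UNIV. ?w first l * ?w False r)"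
    by (simp add: case_prod_unfold mult.assoc infsum_cmult_right')
  also have "\<dots> = q * (total_weight p q \<gamma> first * total_weight p q \<gamma> False)"
    unfolding total_weight_def
    by (simp add: infsum_product_nonneg tree_weight_nonneg summable_tree_weight)
  finally show ?thesis .
qed

lemma mean_uncle_dist_rec:
  "mean_uncle_dist p q \<gamma> n\<^sub>1 first L
     = (if first then p else p * \<gamma>) * (if L \<le> n\<^sub>1 then real L else 0)
       + q * (mean_uncle_dist p q \<gamma> n\<^sub>1 first (Suc L) * total_weight p q \<gamma> False)
       + q * (total_weight p q \<gamma> first * mean_uncle_dist p q \<gamma> n\<^sub>1 False L)"
proof -
  let ?w = "tree_weight p q \<gamma>" and ?d = "uncle_dist_sum n\<^sub>1"
  let ?wd = "\<lambda>first L t. ?w first t * real (?d first L t)"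
  let ?left = "\<lambda>(l, r). ?wd first (Suc L) l * ?w False r"
  let ?right = "\<lambda>(l, r). ?w first l * ?wd False L r"
  have wd_nonneg: "0 \<le> ?wd first L t" for first L t
    by (simp add: tree_weight_nonneg)
  note left = summable_on_product_nonneg[OF wd_nonneg tree_weight_nonneg summable_uncle_dist summable_tree_weight]
    infsum_product_nonneg[OF wd_nonneg tree_weight_nonneg summable_uncle_dist summable_tree_weight]
  note right = summable_on_product_nonneg[OF tree_weight_nonneg wd_nonneg summable_tree_weight summable_uncle_dist]
    infsum_product_nonneg[OF tree_weight_nonneg wd_nonneg summable_tree_weight summable_uncle_dist]
  have "mean_uncle_dist p q \<gamma> n\<^sub>1 first L
      = (\<Sum>e\<in>UNIV. ?wd first L (Leaf e)) + (\<Sum>\<^sub>\<infinity>(l, r)\<in>UNIV. ?wd first L (Node l r))"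
    unfolding mean_uncle_dist_def by (rule infsum_btree[OF summable_uncle_dist])
  also have "(\<Sum>e\<in>UNIV. ?wd first L (Leaf e)) = (if first then p else p * \<gamma>) * (if L \<le> n\<^sub>1 then real L else 0)"
    by (rule sum_mean_uncle_dist_Leaf)
  also have "(\<Sum>\<^sub>\<infinity>(l, r)\<in>UNIV. ?wd first L (Node l r)) = (\<Sum>\<^sub>\<infinity>x\<in>UNIV. q * ?left x + q * ?right x)"
    by (rule infsum_cong) (auto simp: algebra_simps)
  also have "\<dots> = q * infsum ?left UNIV + q * infsum ?right UNIV"
    using left(1) right(1) by (simp add: infsum_add summable_on_cmult_right infsum_cmult_right')
  finally show ?thesis
    using left(2) right(2) by (simp add: mean_uncle_dist_def total_weight_def)
qed

text \<open>\<open>M = total_weight p q \<gamma> False\<close> solves \<open>q M\<^sup>2 - M + p = 0\<close>, whose roots are \<open>1\<close> and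
  \<open>p / q > 1\<close>.\<close>
lemma total_weight_False: "total_weight p q \<gamma> False = 1"
proof -
  define M where "M = total_weight p q \<gamma> False"
  have "(M - 1) * (q * M - p) = q * M * M - (p + q) * M + p"
    by (simp add: algebra_simps)
  also have "\<dots> = 0"
    using total_weight_rec[of False] p_plus_q by (simp add: M_def algebra_simps)
  finally have "(M - 1) * (q * M - p) = 0" .
  moreover have "q * M \<le> q"
    using total_weight_le_1[of False] q_pos by (simp add: M_def mult_left_le)
  then have "q * M - p \<noteq> 0"
    using q_less_p by simp
  ultimately show ?thesis
    by (simp add: M_def)
qed

lemma total_weight_True: "total_weight p q \<gamma> True = 1"
proof -
  define M where "M = total_weight p q \<gamma> True"
  have "M = p + M * q"
    using total_weight_rec[of True] by (simp add: M_def total_weight_False mult.commute)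
  moreover have "M * p + M * q = M"
    using p_plus_q by (simp flip: distrib_left)
  ultimately have "M * p = 1 * p"
    by linarith
  then show ?thesis
    using q_less_p q_pos by (simp add: M_def)
qed

lemma mean_uncle_dist_False:
  "mean_uncle_dist p q \<gamma> n\<^sub>1 False L = \<gamma> * weighted_power_sum (q / p) L n\<^sub>1"
proof (induction L rule: nat_descend_induct[where n = n\<^sub>1])
  case (base L)
  then show ?case
    by (simp add: mean_uncle_dist_def uncle_dist_sum_eq_0 weighted_power_sum_eq_0)
next
  case (descend L)
  have "p * mean_uncle_dist p q \<gamma> n\<^sub>1 False L
      = p * \<gamma> * real L + q * mean_uncle_dist p q \<gamma> n\<^sub>1 False (Suc L)"
  proof -
    have "(p + q) * mean_uncle_dist p q \<gamma> n\<^sub>1 False L = mean_uncle_dist p q \<gamma> n\<^sub>1 False L"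
      using p_plus_q by simp
    then show ?thesis
      using mean_uncle_dist_rec[of False L] descend(1) by (simp add: total_weight_False algebra_simps)
  qed
  also have "\<dots> = p * (\<gamma> * weighted_power_sum (q / p) L n\<^sub>1)"
    using descend q_less_p q_pos by (simp add: weighted_power_sum_rec algebra_simps)
  finally show ?case
    using q_less_p q_pos by simp
qed

lemma mean_uncle_dist_True:
  "mean_uncle_dist p q \<gamma> n\<^sub>1 True L
     = p * (1 - \<gamma>) * weighted_power_sum q L n\<^sub>1 + \<gamma> * weighted_power_sum (q / p) L n\<^sub>1"
proof (induction L rule: nat_descend_induct[where n = n\<^sub>1])
  case (base L)
  then show ?case
    by (simp add: mean_uncle_dist_def uncle_dist_sum_eq_0 weighted_power_sum_eq_0)
next
  case (descend L)
  define A where "A = weighted_power_sum q (Suc L) n\<^sub>1"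
  define B where "B = weighted_power_sum (q / p) (Suc L) n\<^sub>1"
  have "mean_uncle_dist p q \<gamma> n\<^sub>1 True L
      = p * real L + q * (p * (1 - \<gamma>) * A + \<gamma> * B) + q * \<gamma> * (real L + q / p * B)"
    using mean_uncle_dist_rec[of True L] descend mean_uncle_dist_False[of L]
    by (simp add: total_weight_False total_weight_True weighted_power_sum_rec A_def B_def)
  also have "\<dots> = (p + q * \<gamma>) * real L + p * (1 - \<gamma>) * q * A + (q * \<gamma> + q * \<gamma> * (q / p)) * B"
    by (simp add: algebra_simps)
  also have "\<dots> = (p * (1 - \<gamma>) + \<gamma>) * real L + p * (1 - \<gamma>) * q * A + \<gamma> * (q / p) * B"
  proof -
    have "p + q * \<gamma> = p * (1 - \<gamma>) + \<gamma>"
    proof -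
      have "\<gamma> = \<gamma> * (p + q)"
        using p_plus_q by simp
      then show ?thesis
        by (simp add: algebra_simps)
    qed
    moreover have "q * \<gamma> + q * \<gamma> * (q / p) = \<gamma> * (q / p)"
    proof -
      have "q * \<gamma> + q * \<gamma> * (q / p) = q * \<gamma> * (p + q) / p"
        using q_less_p q_pos by (simp add: field_simps)
      then show ?thesis
        using p_plus_q by simp
    qed
    ultimately show ?thesis
      by simp
  qed
  also have "\<dots> = p * (1 - \<gamma>) * (real L + q * A) + \<gamma> * (real L + q / p * B)"
    by (simp add: algebra_simps)
  finally show ?case
    using descend(1) by (simp add: weighted_power_sum_rec A_def B_def)
qed

end

section \<open>The block tree of a cycle won by the attacker\<close>

definition prefix_count :: "('a \<Rightarrow> bool) \<Rightarrow> 'a list \<Rightarrow> nat \<Rightarrow> nat" where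
  "prefix_count P xs k = length (filter P (take k xs))"

abbreviation att_count :: "event list \<Rightarrow> nat \<Rightarrow> nat" where
  "att_count \<equiv> prefix_count (\<lambda>e. e = Att)"

abbreviation hon_count :: "event list \<Rightarrow> nat \<Rightarrow> nat" where
  "hon_count \<equiv> prefix_count (\<lambda>e. e \<noteq> Att)"

lemma prefix_count_0 [simp]: "prefix_count P xs 0 = 0"
  by (simp add: prefix_count_def)

lemma prefix_count_snoc: "k \<le> length xs \<Longrightarrow> prefix_count P (xs @ [x]) k = prefix_count P xs k"
  by (simp add: prefix_count_def)

lemma prefix_count_Suc:
  "i < length xs \<Longrightarrow> prefix_count P xs (Suc i) = prefix_count P xs i + (if P (xs ! i) then 1 else 0)"
  by (simp add: prefix_count_def take_Suc_conv_app_nth)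

lemma prefix_count_Cons_Suc:
  "prefix_count P (x # xs) (Suc j) = (if P x then 1 else 0) + prefix_count P xs j"
  by (simp add: prefix_count_def)

lemma prefix_count_mono: "k \<le> j \<Longrightarrow> prefix_count P xs k \<le> prefix_count P xs j"
  by (auto simp: prefix_count_def take_add dest!: le_Suc_ex)

lemma prefix_count_le_length: "prefix_count P xs k \<le> length xs"
  unfolding prefix_count_def by (metis length_filter_le length_take min.bounded_iff order_trans nle_le)

lemma prefix_count_const:
  "k \<le> j \<Longrightarrow> j \<le> length xs \<Longrightarrow> (\<forall>m. k \<le> m \<and> m < j \<longrightarrow> \<not> P (xs ! m))
    \<Longrightarrow> prefix_count P xs j = prefix_count P xs k"
proof (induction j)
  case (Suc j)
  then show ?case
    by (cases "k = Suc j") (auto simp: prefix_count_Suc)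
qed simp

lemma prefix_count_after:
  "i < j \<Longrightarrow> j \<le> length xs \<Longrightarrow> P (xs ! i) \<Longrightarrow> Suc (prefix_count P xs i) \<le> prefix_count P xs j"
  using prefix_count_mono[of "Suc i" j P xs] prefix_count_Suc[of i xs P] by simp

lemma prefix_count_reaches:
  "1 \<le> h \<Longrightarrow> h \<le> prefix_count P xs k \<Longrightarrow> k \<le> length xs
    \<Longrightarrow> \<exists>i<k. P (xs ! i) \<and> prefix_count P xs (Suc i) = h"
proof (induction k)
  case (Suc k)
  show ?case
  proof (cases "h \<le> prefix_count P xs k")
    case True
    then show ?thesis
      using Suc less_SucI by fastforce
  next
    case False
    then have "P (xs ! k)" "prefix_count P xs (Suc k) = h"
      using Suc.prems prefix_count_Suc[of k xs P] by (auto split: if_splits)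
    then show ?thesis
      by blast
  qed
qed simp

lemma last_idx_Nil [simp]: "last_idx P [] = None"
  by (simp add: last_idx_def)

lemma last_idx_snoc: "last_idx P (bs @ [b]) = (if P b then Some (length bs) else last_idx P bs)"
proof -
  have e: "filter (\<lambda>j. P ((bs @ [b]) ! j)) [0..<length bs] = filter (\<lambda>j. P (bs ! j)) [0..<length bs]"
    by (rule filter_cong) (auto simp: nth_append)
  show ?thesis
    unfolding last_idx_def by (simp add: e Let_def)
qed

lemma last_idx_None: "last_idx P bs = None \<longleftrightarrow> (\<forall>j<length bs. \<not> P (bs ! j))"
  by (induction bs rule: rev_induct) (auto simp: last_idx_snoc nth_append less_Suc_eq)

lemma last_idx_Some:
  "last_idx P bs = Some k \<Longrightarrow>
   k < length bs \<and> P (bs ! k) \<and> (\<forall>m. k < m \<and> m < length bs \<longrightarrow> \<not> P (bs ! m))"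
  by (induction bs rule: rev_induct) (auto simp: last_idx_snoc nth_append less_Suc_eq split: if_splits)

lemma build_snoc: "build bs (xs @ [x]) = build bs xs @ [new_block (build bs xs) x]"
  by (induction xs arbitrary: bs) auto

lemma blocks_snoc: "blocks (xs @ [x]) = blocks xs @ [new_block (blocks xs) x]"
  by (simp add: blocks_def build_snoc)

lemma length_build: "length (build bs xs) = length bs + length xs"
  by (induction xs arbitrary: bs) auto

lemma length_blocks [simp]: "length (blocks xs) = length xs"
  by (simp add: blocks_def length_build)

text \<open>Under \<open>att_not_behind\<close> the attacker always has a block at the height of the public honest
  chain when an honest block is mined, so that Strategy 1 is well defined.\<close>

definition att_not_behind :: "event list \<Rightarrow> bool" where
  "att_not_behind xs \<longleftrightarrow> (\<forall>j<length xs. xs ! j \<noteq> Att \<longrightarrow> hon_count xs j \<le> att_count xs j)"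

definition block_inv :: "event list \<Rightarrow> nat \<Rightarrow> block \<Rightarrow> bool" where
  "block_inv xs i b \<longleftrightarrow> fst b = xs ! i \<and>
     fst (snd b) = (if xs ! i = Att then att_count xs (Suc i) else hon_count xs (Suc i)) \<and>
     (xs ! i = Att \<longrightarrow> (case snd (snd b) of None \<Rightarrow> att_count xs i = 0
        | Some k \<Rightarrow> k < i \<and> xs ! k = Att \<and> (\<forall>m. k < m \<and> m < i \<longrightarrow> xs ! m \<noteq> Att))) \<and>
     (xs ! i = HonH \<longrightarrow> (case snd (snd b) of None \<Rightarrow> hon_count xs i = 0 | Some k \<Rightarrow> k < i \<and> xs ! k \<noteq> Att)) \<and>
     (xs ! i = HonA \<longrightarrow> (case snd (snd b) of None \<Rightarrow> hon_count xs i = 0 | Some k \<Rightarrow> k < i \<and> xs ! k = Att))"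

definition blocks_inv :: "event list \<Rightarrow> bool" where
  "blocks_inv xs \<longleftrightarrow> (\<forall>i<length xs. block_inv xs i (blocks xs ! i))"

lemma block_inv_snoc: "i < length xs \<Longrightarrow> block_inv (xs @ [x]) i b = block_inv xs i b"
  unfolding block_inv_def by (cases "snd (snd b)") (auto simp: nth_append prefix_count_snoc)

lemma blocks_inv_kind: "blocks_inv xs \<Longrightarrow> i < length xs \<Longrightarrow> fst (blocks xs ! i) = xs ! i"
  by (simp add: blocks_inv_def block_inv_def)

lemma blocks_inv_height:
  "blocks_inv xs \<Longrightarrow> i < length xs \<Longrightarrow>
   fst (snd (blocks xs ! i)) = (if xs ! i = Att then att_count xs (Suc i) else hon_count xs (Suc i))"
  by (simp add: blocks_inv_def block_inv_def)

lemma atk_tip_blocks: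
  assumes inv: "blocks_inv xs"
  shows "atk_tip (blocks xs) = None \<and> att_count xs (length xs) = 0
    \<or> (\<exists>k. atk_tip (blocks xs) = Some k \<and> k < length xs \<and> xs ! k = Att
          \<and> (\<forall>m. k < m \<and> m < length xs \<longrightarrow> xs ! m \<noteq> Att)
          \<and> hgt (blocks xs) (Some k) = att_count xs (length xs))"
proof (cases "atk_tip (blocks xs)")
  case None
  then have "\<forall>j<length xs. xs ! j \<noteq> Att"
    using inv by (auto simp: atk_tip_def last_idx_None blocks_inv_def block_inv_def)
  then have "att_count xs (length xs) = att_count xs 0"
    by (intro prefix_count_const) auto
  then show ?thesis
    using None by simp
next
  case (Some k)
  then have "k < length xs" "fst (blocks xs ! k) = Att"
    "\<forall>m. k < m \<and> m < length xs \<longrightarrow> fst (blocks xs ! m) \<noteq> Att"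
    using last_idx_Some[of "\<lambda>b. fst b = Att" "blocks xs" k] by (simp_all add: atk_tip_def)
  then have k: "k < length xs" "xs ! k = Att" "\<forall>m. k < m \<and> m < length xs \<longrightarrow> xs ! m \<noteq> Att"
    using blocks_inv_kind[OF inv] by auto
  then have "att_count xs (length xs) = att_count xs (Suc k)"
    by (intro prefix_count_const) auto
  moreover have "hgt (blocks xs) (Some k) = att_count xs (Suc k)"
    using blocks_inv_height[OF inv k(1)] k by (simp add: hgt_def)
  ultimately show ?thesis
    using Some k by auto
qed

lemma hon_tip_blocks:
  assumes inv: "blocks_inv xs"
  shows "hon_tip (blocks xs) = None \<and> hon_count xs (length xs) = 0
    \<or> (\<exists>k. hon_tip (blocks xs) = Some k \<and> k < length xs \<and> xs ! k \<noteq> Att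
          \<and> hgt (blocks xs) (Some k) = hon_count xs (length xs))"
proof (cases "hon_tip (blocks xs)")
  case None
  then have "\<forall>j<length xs. xs ! j = Att"
    using inv by (auto simp: hon_tip_def last_idx_None blocks_inv_def block_inv_def)
  then have "hon_count xs (length xs) = hon_count xs 0"
    by (intro prefix_count_const) auto
  then show ?thesis
    using None by simp
next
  case (Some k)
  then have "k < length xs" "fst (blocks xs ! k) \<noteq> Att"
    "\<forall>m. k < m \<and> m < length xs \<longrightarrow> fst (blocks xs ! m) = Att"
    using last_idx_Some[of "\<lambda>b. fst b \<noteq> Att" "blocks xs" k] by (simp_all add: hon_tip_def)
  then have k: "k < length xs" "xs ! k \<noteq> Att" "\<forall>m. k < m \<and> m < length xs \<longrightarrow> xs ! m = Att"
    using blocks_inv_kind[OF inv] by auto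
  then have "hon_count xs (length xs) = hon_count xs (Suc k)"
    by (intro prefix_count_const) auto
  moreover have "hgt (blocks xs) (Some k) = hon_count xs (Suc k)"
    using blocks_inv_height[OF inv k(1)] k by (simp add: hgt_def)
  ultimately show ?thesis
    using Some k by auto
qed

lemma hgt_None [simp]: "hgt bs None = 0"
  by (simp add: hgt_def)

lemma atk_at_blocks:
  assumes inv: "blocks_inv xs" and "1 \<le> h" and "h \<le> att_count xs (length xs)"
  obtains k where "atk_at (blocks xs) h = Some k" and "k < length xs" and "xs ! k = Att"
    and "hgt (blocks xs) (Some k) = h"
proof -
  let ?P = "\<lambda>b. fst b = Att \<and> fst (snd b) = h"
  obtain i where i: "i < length xs" "xs ! i = Att" "att_count xs (Suc i) = h"
    using prefix_count_reaches[of h "\<lambda>e. e = Att" xs "length xs"] assms(2,3) by auto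
  then have "?P (blocks xs ! i)"
    using blocks_inv_kind[OF inv] blocks_inv_height[OF inv] by simp
  then obtain k where k: "last_idx ?P (blocks xs) = Some k"
    using i(1) by (cases "last_idx ?P (blocks xs)") (auto simp: last_idx_None)
  then have "k < length xs" "?P (blocks xs ! k)"
    using last_idx_Some[OF k] by auto
  then show thesis
    using that k assms(2) blocks_inv_kind[OF inv] by (auto simp: atk_at_def hgt_def)
qed

lemma block_inv_new_block:
  assumes inv: "blocks_inv xs" and ahead: "att_not_behind (xs @ [x])"
  shows "block_inv (xs @ [x]) (length xs) (new_block (blocks xs) x)"
proof -
  let ?n = "length xs"
  let ?bs = "blocks xs"
  have count_Suc: "prefix_count P (xs @ [x]) (Suc ?n) = prefix_count P xs ?n + (if P x then 1 else 0)"
    for P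
    using prefix_count_Suc[of ?n "xs @ [x]" P] prefix_count_snoc[of ?n xs P x] by simp
  have count: "prefix_count P (xs @ [x]) ?n = prefix_count P xs ?n" for P
    by (simp add: prefix_count_snoc)
  have nth_old: "\<And>m. m < ?n \<Longrightarrow> (xs @ [x]) ! m = xs ! m"
    by (simp add: nth_append)
  have hgt_hon_tip: "hgt ?bs (hon_tip ?bs) = hon_count xs ?n"
    using hon_tip_blocks[OF inv] by auto
  show ?thesis
  proof (cases x)
    case Att
    then show ?thesis
      using atk_tip_blocks[OF inv] count_Suc count nth_old by (auto simp: block_inv_def)
  next
    case HonH
    then show ?thesis
      using hon_tip_blocks[OF inv] count_Suc count nth_old by (auto simp: block_inv_def)
  next
    case HonA
    show ?thesis
    proof (cases "hon_count xs ?n = 0")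
      case True
      then show ?thesis
        using HonA hgt_hon_tip count_Suc count by (simp add: block_inv_def atk_at_def Let_def)
    next
      case False
      have "hon_count (xs @ [x]) ?n \<le> att_count (xs @ [x]) ?n"
        using ahead HonA by (simp add: att_not_behind_def)
      then obtain k where "atk_at ?bs (hon_count xs ?n) = Some k" "k < ?n" "xs ! k = Att"
        "hgt ?bs (Some k) = hon_count xs ?n"
        using atk_at_blocks[OF inv, of "hon_count xs ?n"] False count by auto
      then show ?thesis
        using HonA hgt_hon_tip count_Suc count nth_old by (simp add: block_inv_def Let_def)
    qed
  qed
qed

lemma att_not_behind_snoc: "att_not_behind (xs @ [x]) \<Longrightarrow> att_not_behind xs"
  unfolding att_not_behind_def by (auto simp: nth_append prefix_count_snoc)

lemma blocks_inv_if_att_not_behind: "att_not_behind xs \<Longrightarrow> blocks_inv xs"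
proof (induction xs rule: rev_induct)
  case (snoc x xs)
  have inv: "blocks_inv xs"
    using snoc att_not_behind_snoc by blast
  have "block_inv (xs @ [x]) i (blocks (xs @ [x]) ! i)" if "i < length (xs @ [x])" for i
  proof (cases "i < length xs")
    case True
    then show ?thesis
      using inv by (simp add: blocks_snoc nth_append block_inv_snoc blocks_inv_def)
  next
    case False
    then have "i = length xs"
      using that by simp
    then show ?thesis
      using block_inv_new_block[OF inv snoc.prems] by (simp add: blocks_snoc nth_append)
  qed
  then show ?case
    by (simp add: blocks_inv_def)
qed (simp add: blocks_inv_def)

lemma chain_None: "chain f bs None = {}"
  by (cases f) auto

lemma chain_Att_block:
  assumes inv: "blocks_inv xs"
  shows "j < length xs \<Longrightarrow> xs ! j = Att \<Longrightarrow> att_count xs (Suc j) < f \<Longrightarrow>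
     chain f (blocks xs) (Some j) = {i. i \<le> j \<and> xs ! i = Att}"
proof (induction f arbitrary: j)
  case (Suc f)
  have block: "block_inv xs j (blocks xs ! j)"
    using inv Suc.prems by (simp add: blocks_inv_def)
  show ?case
  proof (cases "snd (snd (blocks xs ! j))")
    case None
    then have "att_count xs j = 0"
      using block Suc.prems by (simp add: block_inv_def)
    then have "\<forall>i<j. xs ! i \<noteq> Att"
      using prefix_count_after[of _ j xs "\<lambda>e. e = Att"] Suc.prems by fastforce
    then have "{i. i \<le> j \<and> xs ! i = Att} = {j}"
      using Suc.prems by (auto simp: le_less)
    then show ?thesis
      using None by (simp add: chain_None)
  next
    case (Some k)
    then have k: "k < j" "xs ! k = Att" "\<forall>m. k < m \<and> m < j \<longrightarrow> xs ! m \<noteq> Att"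
      using block Suc.prems by (simp_all add: block_inv_def)
    then have "att_count xs j = att_count xs (Suc k)"
      using Suc.prems by (intro prefix_count_const) auto
    then have "att_count xs (Suc k) < f"
      using Suc.prems prefix_count_Suc[of j xs] by simp
    then have "chain f (blocks xs) (Some k) = {i. i \<le> k \<and> xs ! i = Att}"
      using Suc.IH[of k] Suc.prems k by simp
    moreover have "{i. i \<le> j \<and> xs ! i = Att} = insert j {i. i \<le> k \<and> xs ! i = Att}"
      using k Suc.prems by (auto simp: le_less) (meson not_less_iff_gr_or_eq)
    ultimately show ?thesis
      using Some by simp
  qed
qed simp

lemma not_before_hd_filter_upt:
  "filter P [0..<n] \<noteq> [] \<Longrightarrow> m < hd (filter P [0..<n]) \<Longrightarrow> \<not> P m"
proof (induction n)
  case (Suc n)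
  then show ?case
    by (cases "filter P [0..<n] = []") (auto simp: filter_empty_conv split: if_splits)
qed simp

context
  fixes ev :: "event list"
  assumes ahead: "att_not_behind ev"
    and won: "att_count ev (length ev) = Suc (hon_count ev (length ev))"
begin

lemma blocks_inv_won: "blocks_inv ev"
  using ahead by (rule blocks_inv_if_att_not_behind)

lemma top_height_won: "top_height ev = att_count ev (length ev)"
proof -
  let ?n = "length ev" and ?m = "att_count ev (length ev)"
  let ?S = "insert 0 ((\<lambda>b. fst (snd b)) ` set (blocks ev))"
  have le: "y \<le> ?m" if "y \<in> ?S" for y
  proof -
    have "y = 0 \<or> (\<exists>i<?n. y = fst (snd (blocks ev ! i)))"
      using that by (auto simp: in_set_conv_nth) (metis fst_conv snd_conv)
    then consider "y = 0" | i where "i < ?n" "y = fst (snd (blocks ev ! i))"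
      by blast
    then show ?thesis
    proof cases
      case 2
      then have "y = (if ev ! i = Att then att_count ev (Suc i) else hon_count ev (Suc i))"
        using blocks_inv_height[OF blocks_inv_won] by simp
      moreover have "att_count ev (Suc i) \<le> ?m" "hon_count ev (Suc i) \<le> hon_count ev ?n"
        using 2 by (auto intro: prefix_count_mono)
      ultimately show ?thesis
        using won by auto
    qed simp
  qed
  obtain i where i: "i < ?n" "ev ! i = Att" "att_count ev (Suc i) = ?m"
    using prefix_count_reaches[of ?m "\<lambda>e. e = Att" ev ?n] won by auto
  then have "fst (snd (blocks ev ! i)) \<in> ?S"
    by simp
  then have "?m \<in> ?S"
    using i blocks_inv_height[OF blocks_inv_won, of i] by simp
  then have "Max ?S = ?m"
    using le by (intro Max_eqI) auto
  then show ?thesis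
    by (simp add: top_height_def)
qed

lemma top_block_won:
  obtains k where "top_block ev = Some k" and "k < length ev" and "ev ! k = Att"
    and "att_count ev (Suc k) = att_count ev (length ev)"
proof -
  let ?n = "length ev" and ?m = "att_count ev (length ev)"
  let ?P = "\<lambda>b. fst (snd b) = top_height ev"
  obtain i where i: "i < ?n" "ev ! i = Att" "att_count ev (Suc i) = ?m"
    using prefix_count_reaches[of ?m "\<lambda>e. e = Att" ev ?n] won by auto
  then have "?P (blocks ev ! i)"
    using blocks_inv_height[OF blocks_inv_won, of i] top_height_won by simp
  then obtain k where top: "last_idx ?P (blocks ev) = Some k"
    using i(1) by (cases "last_idx ?P (blocks ev)") (auto simp: last_idx_None)
  then have k: "k < ?n" "fst (snd (blocks ev ! k)) = ?m"
    using last_idx_Some[OF top] top_height_won by auto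
  have "ev ! k = Att"
  proof (rule ccontr)
    assume "ev ! k \<noteq> Att"
    then have "hon_count ev (Suc k) = ?m"
      using k blocks_inv_height[OF blocks_inv_won, of k] by simp
    moreover have "hon_count ev (Suc k) \<le> hon_count ev ?n"
      using k by (intro prefix_count_mono) auto
    ultimately show False
      using won by simp
  qed
  then show thesis
    using that top k blocks_inv_height[OF blocks_inv_won, of k] by (simp add: top_block_def)
qed

lemma official_won: "official ev = {i. i < length ev \<and> ev ! i = Att}"
proof -
  let ?n = "length ev" and ?m = "att_count ev (length ev)"
  obtain k where k: "top_block ev = Some k" "k < ?n" "ev ! k = Att" "att_count ev (Suc k) = ?m"
    using top_block_won by blast
  have "att_count ev (Suc k) < Suc ?n"
    using prefix_count_le_length[of "\<lambda>e. e = Att" ev "Suc k"] by simp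
  then have "official ev = {i. i \<le> k \<and> ev ! i = Att}"
    unfolding official_def using chain_Att_block[OF blocks_inv_won k(2) k(3), of "Suc ?n"] k(1)
    by (simp del: chain.simps)
  also have "\<dots> = {i. i < ?n \<and> ev ! i = Att}"
  proof (intro set_eqI iffI)
    fix i
    assume "i \<in> {i. i < ?n \<and> ev ! i = Att}"
    then have i: "i < ?n" "ev ! i = Att"
      by auto
    have "i \<le> k"
    proof (rule ccontr)
      assume "\<not> i \<le> k"
      then have "Suc (att_count ev i) \<le> att_count ev ?n" "att_count ev (Suc k) \<le> att_count ev i"
        using i prefix_count_after[of i ?n ev "\<lambda>e. e = Att"] by (auto intro: prefix_count_mono)
      then show False
        using k by simp
    qed
    then show "i \<in> {i. i \<le> k \<and> ev ! i = Att}"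
      using i by simp
  qed (use k in auto)
  finally show ?thesis .
qed

lemma is_uncle_won:
  "is_uncle ev j \<longleftrightarrow> j < length ev \<and> ev ! j \<noteq> Att \<and> (ev ! j = HonA \<or> hon_count ev j = 0)"
proof (cases "j < length ev")
  case True
  have block: "block_inv ev j (blocks ev ! j)"
    using blocks_inv_won True by (simp add: blocks_inv_def)
  show ?thesis
  proof (cases "bparent ev j")
    case None
    then show ?thesis
      using block True by (cases "ev ! j") (simp_all add: is_uncle_def official_won bparent_def block_inv_def)
  next
    case (Some k)
    then have "k < j" and "ev ! j = HonH \<Longrightarrow> ev ! k \<noteq> Att" and "ev ! j = HonA \<Longrightarrow> ev ! k = Att"
      using block by (cases "ev ! j"; simp add: bparent_def block_inv_def)+
    moreover have "ev ! k \<noteq> Att \<Longrightarrow> hon_count ev j \<noteq> 0"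
      using prefix_count_after[of k j ev "\<lambda>e. e \<noteq> Att"] True \<open>k < j\<close> by simp
    ultimately show ?thesis
      using Some True by (cases "ev ! j") (auto simp: is_uncle_def official_won)
  qed
qed (simp add: is_uncle_def)

text \<open>The nephew of an honest block is the next attacker block, or the first block of the next
  cycle.\<close>

lemma nephew_height_won:
  assumes j: "j < length ev" "ev ! j \<noteq> Att"
  shows "nephew_height ev j = Suc (att_count ev j)"
proof -
  let ?n = "length ev"
  have att_count_Suc_j: "att_count ev (Suc j) = att_count ev j"
    using j prefix_count_Suc[of j ev] by simp
  define ks where "ks = filter (\<lambda>k. k \<in> official ev \<and> k > j) [0..<?n]"
  have ks: "ks = filter (\<lambda>k. j < k \<and> k < ?n \<and> ev ! k = Att) [0..<?n]"
    unfolding ks_def official_won by (rule filter_cong) auto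
  have pub_time: "pub_time ev j = j"
    using j by (simp add: pub_time_def)
  show ?thesis
  proof (cases "ks = []")
    case True
    then have "\<forall>m. Suc j \<le> m \<and> m < ?n \<longrightarrow> ev ! m \<noteq> Att"
      by (auto simp: ks filter_empty_conv)
    then have "att_count ev ?n = att_count ev (Suc j)"
      using j by (intro prefix_count_const) auto
    then show ?thesis
      using True pub_time att_count_Suc_j top_height_won by (simp add: nephew_height_def ks_def[symmetric])
  next
    case False
    define k\<^sub>0 where "k\<^sub>0 = hd ks"
    have "k\<^sub>0 \<in> set ks"
      using False by (simp add: k\<^sub>0_def)
    then have k\<^sub>0: "j < k\<^sub>0" "k\<^sub>0 < ?n" "ev ! k\<^sub>0 = Att"
      by (auto simp: ks)
    have "\<not> (j < m \<and> m < ?n \<and> ev ! m = Att)" if "m < k\<^sub>0" for m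
      using not_before_hd_filter_upt[of "\<lambda>k. j < k \<and> k < ?n \<and> ev ! k = Att" ?n m] False that
      unfolding k\<^sub>0_def ks by blast
    then have "att_count ev k\<^sub>0 = att_count ev (Suc j)"
      using k\<^sub>0 by (intro prefix_count_const) auto
    then have "bheight ev k\<^sub>0 = Suc (att_count ev j)"
      using k\<^sub>0 blocks_inv_height[OF blocks_inv_won, of k\<^sub>0] prefix_count_Suc[of k\<^sub>0 ev] att_count_Suc_j
      by (simp add: bheight_def)
    then show ?thesis
      using False pub_time by (simp add: nephew_height_def ks_def[symmetric] k\<^sub>0_def)
  qed
qed

lemma dist_won: "j < length ev \<Longrightarrow> ev ! j \<noteq> Att \<Longrightarrow> dist ev j = att_count ev j - hon_count ev j"
  using nephew_height_won blocks_inv_height[OF blocks_inv_won, of j] prefix_count_Suc[of j ev]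
  by (simp add: dist_def bheight_def)

lemma Delta_won:
  "Delta n\<^sub>1 ev = (\<Sum>j<length ev.
     if ev ! j \<noteq> Att \<and> (ev ! j = HonA \<or> hon_count ev j = 0) \<and> att_count ev j - hon_count ev j \<le> n\<^sub>1
     then att_count ev j - hon_count ev j else 0)"
proof -
  have "{j. is_uncle ev j \<and> dist ev j \<le> n\<^sub>1} = {j \<in> {..<length ev}. is_uncle ev j \<and> dist ev j \<le> n\<^sub>1}"
    by (auto simp: is_uncle_def)
  then have "Delta n\<^sub>1 ev = sum (dist ev) {j \<in> {..<length ev}. is_uncle ev j \<and> dist ev j \<le> n\<^sub>1}"
    unfolding Delta_def by simp
  also have "\<dots> = (\<Sum>j<length ev. if is_uncle ev j \<and> dist ev j \<le> n\<^sub>1 then dist ev j else 0)"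
    by (rule sum.inter_filter) simp
  also have "\<dots> = (\<Sum>j<length ev.
     if ev ! j \<noteq> Att \<and> (ev ! j = HonA \<or> hon_count ev j = 0) \<and> att_count ev j - hon_count ev j \<le> n\<^sub>1
     then att_count ev j - hon_count ev j else 0)"
    by (rule sum.cong) (auto simp: is_uncle_won dist_won)
  finally show ?thesis .
qed

end

text \<open>\<open>uncle_dist_list n\<^sub>1 L first xs\<close> is \<open>uncle_dist_sum\<close> read off the event list, \<open>L\<close> being the
  current lead of the attacker; \<open>lead_positive L xs\<close> says that he stays ahead.\<close>

fun uncle_dist_list :: "nat \<Rightarrow> nat \<Rightarrow> bool \<Rightarrow> event list \<Rightarrow> nat" where
  "uncle_dist_list n\<^sub>1 L first [] = 0"
| "uncle_dist_list n\<^sub>1 L first (x # xs) =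
     (if x = Att then uncle_dist_list n\<^sub>1 (Suc L) first xs
      else (if (first \<or> x = HonA) \<and> L \<le> n\<^sub>1 then L else 0) + uncle_dist_list n\<^sub>1 (L - 1) False xs)"

fun lead_positive :: "nat \<Rightarrow> event list \<Rightarrow> bool" where
  "lead_positive L [] \<longleftrightarrow> True"
| "lead_positive L (x # xs) \<longleftrightarrow>
     (if x = Att then lead_positive (Suc L) xs else 1 \<le> L \<and> lead_positive (L - 1) xs)"

lemma uncle_dist_list_eq_sum:
  "lead_positive L xs \<Longrightarrow>
   uncle_dist_list n\<^sub>1 L first xs = (\<Sum>j<length xs.
     if xs ! j \<noteq> Att \<and> (xs ! j = HonA \<or> (first \<and> hon_count xs j = 0))
       \<and> L + att_count xs j - hon_count xs j \<le> n\<^sub>1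
     then L + att_count xs j - hon_count xs j else 0)"
proof (induction xs arbitrary: L first)
  case (Cons x xs)
  let ?f = "\<lambda>L first xs j. if xs ! j \<noteq> Att \<and> (xs ! j = HonA \<or> (first \<and> hon_count xs j = 0))
      \<and> L + att_count xs j - hon_count xs j \<le> n\<^sub>1 then L + att_count xs j - hon_count xs j else 0"
  have shift: "(\<Sum>j<length (x # xs). ?f L first (x # xs) j)
      = ?f L first (x # xs) 0 + (\<Sum>j<length xs. ?f L first (x # xs) (Suc j))"
    by (simp add: sum.lessThan_Suc_shift del: sum.lessThan_Suc)
  show ?case
  proof (cases "x = Att")
    case True
    have "?f L first (x # xs) (Suc j) = ?f (Suc L) first xs j" for j
      using True by (simp add: prefix_count_Cons_Suc)
    then show ?thesis
      using True Cons shift by simp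
  next
    case False
    then have L: "1 \<le> L" "lead_positive (L - 1) xs"
      using Cons.prems by auto
    have "?f L first (x # xs) (Suc j) = ?f (L - 1) False xs j" for j
      using False L by (simp add: prefix_count_Cons_Suc)
    moreover have "?f L first (x # xs) 0 = (if (first \<or> x = HonA) \<and> L \<le> n\<^sub>1 then L else 0)"
      using False by auto
    ultimately show ?thesis
      using False Cons.IH[OF L(2)] shift by simp
  qed
qed simp

lemma lead_positive_hon_count_less:
  "lead_positive L xs \<Longrightarrow> j < length xs \<Longrightarrow> xs ! j \<noteq> Att \<Longrightarrow> hon_count xs j < L + att_count xs j"
proof (induction xs arbitrary: L j)
  case (Cons x xs)
  show ?case
  proof (cases j)
    case 0
    then show ?thesis
      using Cons.prems by (auto split: if_splits)
  next
    case (Suc i)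
    then show ?thesis
      using Cons.prems Cons.IH[of "Suc L" i] Cons.IH[of "L - 1" i]
      by (auto simp: prefix_count_Cons_Suc split: if_splits)
  qed
qed simp

lemma uncle_dist_list_tree_word:
  "honest_tree t \<Longrightarrow>
   uncle_dist_list n\<^sub>1 L first (tree_word t @ rest)
     = uncle_dist_sum n\<^sub>1 first L t + uncle_dist_list n\<^sub>1 (L - 1) False rest"
  by (induction t arbitrary: L first rest) auto

lemma lead_positive_tree_word:
  "honest_tree t \<Longrightarrow> lead_positive L (tree_word t @ rest) \<longleftrightarrow> 1 \<le> L \<and> lead_positive (L - 1) rest"
  by (induction t arbitrary: L rest) auto

lemma length_filter_honest_tree_word:
  "honest_tree t \<Longrightarrow>
   length (filter (\<lambda>e. e \<noteq> Att) (tree_word t)) = Suc (length (filter (\<lambda>e. e = Att) (tree_word t)))"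
  by (induction t) auto

lemma Delta_SS_tree_word:
  assumes honest: "honest_tree t"
  shows "Delta n\<^sub>1 (Att # Att # tree_word t) = uncle_dist_sum n\<^sub>1 True 2 t"
proof -
  let ?ev = "Att # Att # tree_word t"
  have lead: "lead_positive 0 ?ev"
    using lead_positive_tree_word[OF honest, of 2 "[]"] by (simp add: numeral_2_eq_2)
  then have ahead: "att_not_behind ?ev"
    unfolding att_not_behind_def using lead_positive_hon_count_less[OF lead] by (auto simp: less_imp_le)
  have won: "att_count ?ev (length ?ev) = Suc (hon_count ?ev (length ?ev))"
    using length_filter_honest_tree_word[OF honest] by (simp add: prefix_count_def)
  have "Delta n\<^sub>1 ?ev = uncle_dist_list n\<^sub>1 0 True ?ev"
    by (simp only: Delta_won[OF ahead won] uncle_dist_list_eq_sum[OF lead] add_0 simp_thms)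
  also have "\<dots> = uncle_dist_sum n\<^sub>1 True 2 t"
    using uncle_dist_list_tree_word[OF honest, of n\<^sub>1 2 True "[]"] by (simp add: numeral_2_eq_2)
  finally show ?thesis .
qed

section \<open>The short cycles\<close>

lemma Delta_single_uncle:
  assumes "\<And>j. is_uncle ev j \<longleftrightarrow> j = j\<^sub>0" and "dist ev j\<^sub>0 \<le> n\<^sub>1"
  shows "Delta n\<^sub>1 ev = dist ev j\<^sub>0"
proof -
  have "{j. is_uncle ev j \<and> dist ev j \<le> n\<^sub>1} = {j\<^sub>0}"
    using assms by auto
  then show ?thesis
    by (simp add: Delta_def)
qed

lemmas blocks_defs = blocks_def atk_tip_def hon_tip_def last_idx_def hgt_def atk_at_def upt_rec
lemmas official_defs = official_def top_block_def top_height_def last_idx_def upt_rec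
lemmas dist_defs = dist_def nephew_height_def pub_time_def bheight_def upt_rec

lemma Delta_Att_HonH_HonH: "1 \<le> n\<^sub>1 \<Longrightarrow> Delta n\<^sub>1 [Att, HonH, HonH] = 1"
proof -
  have blocks: "blocks [Att, HonH, HonH] = [(Att, 1, None), (HonH, 1, None), (HonH, 2, Some 1)]"
    by (simp add: blocks_defs)
  have official: "official [Att, HonH, HonH] = {Suc 0, Suc (Suc 0)}"
    by (simp add: official_defs blocks insert_commute)
  have "is_uncle [Att, HonH, HonH] j \<longleftrightarrow> j = 0" for j
    by (auto simp: is_uncle_def official bparent_def blocks less_Suc_eq)
  moreover have "dist [Att, HonH, HonH] 0 = 1"
    by (simp add: dist_defs official blocks)
  ultimately show "1 \<le> n\<^sub>1 \<Longrightarrow> ?thesis"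
    using Delta_single_uncle by simp
qed

lemma Delta_Att_HonH_HonA: "1 \<le> n\<^sub>1 \<Longrightarrow> Delta n\<^sub>1 [Att, HonH, HonA] = 1"
proof -
  have blocks: "blocks [Att, HonH, HonA] = [(Att, 1, None), (HonH, 1, None), (HonA, 2, Some 0)]"
    by (simp add: blocks_defs)
  have official: "official [Att, HonH, HonA] = {0, Suc (Suc 0)}"
    by (simp add: official_defs blocks insert_commute)
  have "is_uncle [Att, HonH, HonA] j \<longleftrightarrow> j = 1" for j
    by (auto simp: is_uncle_def official bparent_def blocks less_Suc_eq)
  moreover have "dist [Att, HonH, HonA] 1 = 1"
    by (simp add: dist_defs official blocks)
  ultimately show "1 \<le> n\<^sub>1 \<Longrightarrow> ?thesis"
    using Delta_single_uncle by simp
qed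

lemma Delta_Att_HonH_Att: "1 \<le> n\<^sub>1 \<Longrightarrow> Delta n\<^sub>1 [Att, HonH, Att] = 1"
proof -
  have blocks: "blocks [Att, HonH, Att] = [(Att, 1, None), (HonH, 1, None), (Att, 2, Some 0)]"
    by (simp add: blocks_defs)
  have official: "official [Att, HonH, Att] = {0, Suc (Suc 0)}"
    by (simp add: official_defs blocks insert_commute)
  have "is_uncle [Att, HonH, Att] j \<longleftrightarrow> j = 1" for j
    by (auto simp: is_uncle_def official bparent_def blocks less_Suc_eq)
  moreover have "dist [Att, HonH, Att] 1 = 1"
    by (simp add: dist_defs official blocks)
  ultimately show "1 \<le> n\<^sub>1 \<Longrightarrow> ?thesis"
    using Delta_single_uncle by simp
qed

lemma Delta_HonH: "Delta n\<^sub>1 [HonH] = 0"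
proof -
  have "official [HonH] = {0}"
    by (simp add: official_defs blocks_defs)
  then show ?thesis
    by (simp add: Delta_def is_uncle_def)
qed

section \<open>Cycles of positive probability\<close>

lemma letter_of_eq_S: "letter_of e = S \<longleftrightarrow> e = Att"
  by (cases e) auto

lemma letter_of_eq_H: "letter_of e = H \<longleftrightarrow> e \<noteq> Att"
  by (cases e) auto

lemma length_leaves: "length (leaves t) = Suc (inner_nodes t)"
  by (induction t) auto

lemma leaves_ne_Nil: "leaves t \<noteq> []"
  by (induction t) auto

lemma length_tree_word: "length (tree_word t) = Suc (2 * inner_nodes t)"
  by (induction t) auto

lemma honest_tree_leaves: "honest_tree t \<Longrightarrow> e \<in> set (leaves t) \<Longrightarrow> e \<noteq> Att"
  by (induction t) auto

lemma filter_is_honest_tree_word: "honest_tree t \<Longrightarrow> filter is_honest (tree_word t) = leaves t"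
  by (induction t) (auto simp: is_honest_def)

text \<open>The second property says that \<open>v\<close> is a Dyck word; for \<open>Node l r\<close>, \<open>v = S v\<^sub>l H v\<^sub>r\<close>.\<close>
lemma tree_word_letters:
  assumes "honest_tree t"
  obtains v where "map letter_of (tree_word t) = v @ [H]"
    and "\<And>n rest. dyck_aux n (v @ rest) = dyck_aux n rest"
  using assms
proof (induction t arbitrary: thesis)
  case (Leaf e)
  then show ?case
    by (auto simp: letter_of_eq_H)
next
  case (Node l r)
  obtain v\<^sub>l where l: "map letter_of (tree_word l) = v\<^sub>l @ [H]" "\<And>n rest. dyck_aux n (v\<^sub>l @ rest) = dyck_aux n rest"
    using Node.IH(1) Node.prems(2) by auto
  obtain v\<^sub>r where r: "map letter_of (tree_word r) = v\<^sub>r @ [H]" "\<And>n rest. dyck_aux n (v\<^sub>r @ rest) = dyck_aux n rest"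
    using Node.IH(2) Node.prems(2) by auto
  show ?case
  proof (rule Node.prems(1))
    show "map letter_of (tree_word (Node l r)) = (S # v\<^sub>l @ H # v\<^sub>r) @ [H]"
      using l r by simp
    show "dyck_aux n ((S # v\<^sub>l @ H # v\<^sub>r) @ rest) = dyck_aux n rest" for n rest
      using l(2)[of "Suc n" "H # v\<^sub>r @ rest"] r(2) by simp
  qed
qed

lemma dyck_aux_tree_words:
  "dyck_aux n (map letter_of w) \<Longrightarrow> e \<noteq> Att \<Longrightarrow>
   \<exists>ts. length ts = Suc n \<and> w @ [e] = concat (map tree_word ts) \<and> (\<forall>t\<in>set ts. honest_tree t)"
proof (induction w arbitrary: n)
  case Nil
  then show ?case
    by (intro exI[of _ "[Leaf e]"]) auto
next
  case (Cons x w)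
  show ?case
  proof (cases "x = Att")
    case True
    then obtain ts where ts: "length ts = Suc (Suc n)" "w @ [e] = concat (map tree_word ts)"
      "\<forall>t\<in>set ts. honest_tree t"
      using Cons by auto
    then obtain t\<^sub>1 t\<^sub>2 rest where "ts = t\<^sub>1 # t\<^sub>2 # rest"
      by (metis length_Suc_conv)
    then show ?thesis
      using ts True by (intro exI[of _ "Node t\<^sub>1 t\<^sub>2 # rest"]) auto
  next
    case False
    then have "letter_of x = H"
      by (simp add: letter_of_eq_H)
    then obtain m where m: "n = Suc m" "dyck_aux m (map letter_of w)"
      using Cons.prems by (cases n) auto
    then obtain ts where "length ts = Suc m" "w @ [e] = concat (map tree_word ts)"
      "\<forall>t\<in>set ts. honest_tree t"
      using Cons by blast
    then show ?thesis
      using m False by (intro exI[of _ "Leaf x # ts"]) auto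
  qed
qed

lemma tree_word_append_inj:
  "honest_tree t \<Longrightarrow> honest_tree u \<Longrightarrow> tree_word t @ xs = tree_word u @ ys \<Longrightarrow> t = u \<and> xs = ys"
proof (induction t arbitrary: u xs ys)
  case (Leaf e)
  then show ?case
    by (cases u) simp_all
next
  case (Node t\<^sub>1 t\<^sub>2)
  note IH = Node.IH and prems = Node.prems
  show ?case
  proof (cases u)
    case (Leaf e)
    then show ?thesis
      using prems by simp
  next
    case (Node u\<^sub>1 u\<^sub>2)
    then have honest: "honest_tree t\<^sub>1" "honest_tree t\<^sub>2" "honest_tree u\<^sub>1" "honest_tree u\<^sub>2"
      using prems by simp_all
    have "tree_word t\<^sub>1 @ (tree_word t\<^sub>2 @ xs) = tree_word u\<^sub>1 @ (tree_word u\<^sub>2 @ ys)"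
      using prems Node by simp
    then have "t\<^sub>1 = u\<^sub>1" and "tree_word t\<^sub>2 @ xs = tree_word u\<^sub>2 @ ys"
      using IH(1)[OF honest(1,3)] by blast+
    then show ?thesis
      using IH(2)[OF honest(2,4)] Node by simp
  qed
qed

lemma inj_on_SS_tree_word: "inj_on (\<lambda>t. Att # Att # tree_word t) {t. honest_tree t}"
  unfolding inj_on_def using tree_word_append_inj[of _ _ "[]" "[]"] by auto

lemma map_letter_of_eq_SS:
  assumes "map letter_of ev = S # S # r"
  obtains u where "ev = Att # Att # u" and "map letter_of u = r"
proof -
  obtain a b u where "ev = a # b # u" "letter_of a = S" "letter_of b = S" "map letter_of u = r"
    using assms by (auto simp: map_eq_Cons_conv)
  then show thesis
    using that by (simp add: letter_of_eq_S)
qed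

lemma map_letter_of_eq_snoc_H:
  assumes "map letter_of u = v @ [H]"
  obtains w e where "u = w @ [e]" and "map letter_of w = v" and "e \<noteq> Att"
  using assms by (cases u rule: rev_exhaust) (auto simp: letter_of_eq_H)

lemma word_prob_nonzero_cases:
  "word_prob p q w \<noteq> 0 \<Longrightarrow>
   w = [H] \<or> w = [S, H, S] \<or> w = [S, H, H] \<or> (\<exists>v. dyck v \<and> w = [S, S] @ v @ [H])"
  unfolding word_prob_def by (auto split: if_splits)

lemma cycle_prob_nonzero_cases:
  assumes "cycle_prob p q \<gamma> ev \<noteq> 0"
  shows "ev \<in> {[HonH], [Att, HonH, Att], [Att, HonH, HonH], [Att, HonH, HonA]}
    \<or> (\<exists>t. honest_tree t \<and> ev = Att # Att # tree_word t)"
proof -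
  let ?w = "map letter_of ev"
  have first_HonH: "filter is_honest ev \<noteq> [] \<and> hd (filter is_honest ev) = HonH"
    and "word_prob p q ?w \<noteq> 0"
    using assms by (auto simp: cycle_prob_def Let_def split: if_splits)
  then consider "?w = [H]" | "?w = [S, H, S]" | "?w = [S, H, H]" | v where "dyck v" "?w = [S, S] @ v @ [H]"
    using word_prob_nonzero_cases by blast
  then show ?thesis
  proof cases
    case 1
    then obtain e where "ev = [e]"
      by (auto simp: map_eq_Cons_conv)
    then show ?thesis
      using first_HonH by (simp add: is_honest_def split: if_splits)
  next
    case 2
    then obtain a b c where "ev = [a, b, c]" "letter_of a = S" "letter_of c = S"
      by (auto simp: map_eq_Cons_conv)
    then show ?thesis
      using first_HonH by (simp add: letter_of_eq_S is_honest_def split: if_splits)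
  next
    case 3
    then obtain a b c where ev: "ev = [a, b, c]" "letter_of a = S" "letter_of b = H" "letter_of c = H"
      by (auto simp: map_eq_Cons_conv)
    moreover have "c = HonH \<or> c = HonA"
      using ev(4) by (cases c) auto
    ultimately show ?thesis
      using first_HonH by (auto simp: letter_of_eq_S letter_of_eq_H is_honest_def split: if_splits)
  next
    case 4
    obtain u where ev: "ev = Att # Att # u" and "map letter_of u = v @ [H]"
      using map_letter_of_eq_SS[of ev "v @ [H]"] 4(2) by auto
    then obtain w e where u: "u = w @ [e]" "map letter_of w = v" "e \<noteq> Att"
      using map_letter_of_eq_snoc_H by metis
    then have "dyck_aux 0 (map letter_of w)"
      using 4(1) by (simp add: dyck_def)
    then obtain t where "w @ [e] = tree_word t" "honest_tree t"
      using dyck_aux_tree_words[of 0 w e] u(3) by (auto simp: length_Suc_conv)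
    then show ?thesis
      using ev u by auto
  qed
qed

lemma prod_list_leaf_weight:
  "(\<forall>e\<in>set es. e \<noteq> Att) \<Longrightarrow>
   prod_list (map (leaf_weight p \<gamma>) es)
     = p ^ length es * prod_list (map (\<lambda>e. if e = HonA then \<gamma> else 1 - \<gamma>) es)"
proof (induction es)
  case (Cons e es)
  then have "leaf_weight p \<gamma> e = p * (if e = HonA then \<gamma> else 1 - \<gamma>)"
    by (cases e) (auto simp: leaf_weight_def)
  then show ?case
    using Cons by simp
qed simp

lemma tree_weight_False_eq:
  "tree_weight p q \<gamma> False t = q ^ inner_nodes t * prod_list (map (leaf_weight p \<gamma>) (leaves t))"
  by (induction t) (auto simp: power_add)

lemma tree_weight_True_eq:
  "tree_weight p q \<gamma> True t =
     (if hd (leaves t) = HonH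
      then p * q ^ inner_nodes t * prod_list (map (leaf_weight p \<gamma>) (tl (leaves t))) else 0)"
proof (induction t)
  case (Node l r)
  have "hd (leaves l @ leaves r) = hd (leaves l)" "tl (leaves l @ leaves r) = tl (leaves l) @ leaves r"
    using leaves_ne_Nil[of l] by auto
  then show ?case
    using Node by (simp add: tree_weight_False_eq power_add)
qed simp

lemma tree_weight_eq_0_if_not_honest: "\<not> honest_tree t \<Longrightarrow> tree_weight p q \<gamma> first t = 0"
  by (induction t arbitrary: first) (auto simp: leaf_weight_def)

lemma cycle_prob_SS_tree_word:
  assumes honest: "honest_tree t"
  shows "cycle_prob p q \<gamma> (Att # Att # tree_word t) = q\<^sup>2 * tree_weight p q \<gamma> True t"
proof -
  obtain v where v: "map letter_of (tree_word t) = v @ [H]"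
    and balanced: "\<And>n rest. dyck_aux n (v @ rest) = dyck_aux n rest"
    using tree_word_letters[OF honest] by blast
  have "dyck v"
    using balanced[of 0 "[]"] by (simp add: dyck_def)
  moreover have "length (map letter_of (Att # Att # tree_word t)) = 3 + 2 * inner_nodes t"
    by (simp add: length_tree_word)
  ultimately have word_prob: "word_prob p q (map letter_of (Att # Att # tree_word t))
      = q\<^sup>2 * p * (p * q) ^ inner_nodes t"
    using v unfolding word_prob_def by auto
  have "filter is_honest (Att # Att # tree_word t) = leaves t"
    using honest by (simp add: filter_is_honest_tree_word is_honest_def)
  moreover have "prod_list (map (leaf_weight p \<gamma>) (tl (leaves t)))
      = p ^ inner_nodes t * prod_list (map (\<lambda>e. if e = HonA then \<gamma> else 1 - \<gamma>) (tl (leaves t)))"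
    using prod_list_leaf_weight[of "tl (leaves t)"] honest_tree_leaves[OF honest] length_leaves[of t]
    by (simp add: list.set_sel(2) leaves_ne_Nil)
  ultimately show ?thesis
    unfolding cycle_prob_def Let_def tree_weight_True_eq using leaves_ne_Nil[of t] word_prob
    by (simp add: power_mult_distrib algebra_simps)
qed

section \<open>The closed form\<close>

lemma weighted_power_sum_q_closed_form:
  fixes p q :: real
  assumes "0 < p" and "p + q = 1"
  shows "q\<^sup>2 * p * weighted_power_sum q 2 (Suc m)
    = q / p * (q * (1 + p) - (1 + real (Suc m) * p) * q ^ Suc m)"
proof -
  have p: "p = 1 - q"
    using assms(2) by simp
  then have "p\<^sup>2 * weighted_power_sum q 2 (Suc m) = 2 - q - (real m + 2) * q ^ m + (real m + 1) * q ^ Suc m"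
    using weighted_power_sum_closed_form[of q m] by simp
  then have "q\<^sup>2 * p * weighted_power_sum q 2 (Suc m) * p
      = q\<^sup>2 * (2 - q - (real m + 2) * q ^ m + (real m + 1) * q ^ Suc m)"
    by (simp add: power2_eq_square mult_ac)
  also have "\<dots> = q * (q * (1 + p) - (1 + real (Suc m) * p) * q ^ Suc m)"
    unfolding p by (simp add: algebra_simps power2_eq_square)
  finally show ?thesis
    using assms(1) by (simp add: field_simps)
qed

lemma weighted_power_sum_ratio_closed_form:
  fixes p q :: real
  assumes "0 < p" and "q \<noteq> p"
  shows "q\<^sup>2 * weighted_power_sum (q / p) 2 (Suc m)
    = p * q\<^sup>2 / (p - q)\<^sup>2 * (2 * p - q - (p + real (Suc m) * (p - q)) * (q / p) ^ m)"
proof -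
  define r where "r = q / p"
  define y where "y = r ^ m"
  have r: "q = r * p"
    using assms(1) by (simp add: r_def)
  have "1 - r = (p - q) / p"
    using assms(1) by (simp add: r_def field_simps)
  then have "((p - q) / p)\<^sup>2 * weighted_power_sum r 2 (Suc m)
      = 2 - r - (real m + 2) * y + (real m + 1) * (r * y)"
    using weighted_power_sum_closed_form[of r m] by (simp add: y_def)
  then have "(p - q)\<^sup>2 * weighted_power_sum r 2 (Suc m)
      = p\<^sup>2 * (2 - r - (real m + 2) * y + (real m + 1) * (r * y))"
    using assms(1) by (simp add: power_divide field_simps)
  also have "\<dots> = p * (2 * p - q - (p + real (Suc m) * (p - q)) * y)"
    unfolding r by (simp add: algebra_simps power2_eq_square)
  finally have "weighted_power_sum r 2 (Suc m)
      = p * (2 * p - q - (p + real (Suc m) * (p - q)) * y) / (p - q)\<^sup>2"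
    using assms(2) by (simp add: field_simps)
  then have "q\<^sup>2 * weighted_power_sum r 2 (Suc m)
      = p * q\<^sup>2 / (p - q)\<^sup>2 * (2 * p - q - (p + real (Suc m) * (p - q)) * y)"
    by (simp add: mult_ac)
  then show ?thesis
    by (simp only: r_def y_def)
qed

context
  fixes p q \<gamma> :: real and n\<^sub>1 :: nat
  assumes q_pos: "0 < q" and q_less_p: "q < p" and p_plus_q: "p + q = 1"
    and \<gamma>_nonneg: "0 \<le> \<gamma>" and \<gamma>_le_1: "\<gamma> \<le> 1"
begin

lemma has_sum_short_cycles:
  assumes "1 \<le> n\<^sub>1"
  shows "((\<lambda>ev. cycle_prob p q \<gamma> ev * real (Delta n\<^sub>1 ev)) has_sum (p * q))
    {[HonH], [Att, HonH, Att], [Att, HonH, HonH], [Att, HonH, HonA]}"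
proof -
  let ?c = "\<lambda>ev. cycle_prob p q \<gamma> ev * real (Delta n\<^sub>1 ev)"
  have "?c [HonH] = 0"
    by (simp add: Delta_HonH)
  moreover have "?c [Att, HonH, Att] = p * q\<^sup>2"
    using assms by (simp add: Delta_Att_HonH_Att cycle_prob_def word_prob_def is_honest_def)
  moreover have "?c [Att, HonH, HonH] = p\<^sup>2 * q * (1 - \<gamma>)"
    using assms by (simp add: Delta_Att_HonH_HonH cycle_prob_def word_prob_def is_honest_def)
  moreover have "?c [Att, HonH, HonA] = p\<^sup>2 * q * \<gamma>"
    using assms by (simp add: Delta_Att_HonH_HonA cycle_prob_def word_prob_def is_honest_def)
  ultimately have "sum ?c {[HonH], [Att, HonH, Att], [Att, HonH, HonH], [Att, HonH, HonA]}
      = p * q\<^sup>2 + p\<^sup>2 * q * (1 - \<gamma>) + p\<^sup>2 * q * \<gamma>"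
    by simp
  also have "\<dots> = p * q * (p + q)"
    by (simp add: algebra_simps power2_eq_square)
  finally have sum_eq: "sum ?c {[HonH], [Att, HonH, Att], [Att, HonH, HonH], [Att, HonH, HonA]} = p * q"
    by (simp only: p_plus_q mult_1_right)
  have "(?c has_sum sum ?c {[HonH], [Att, HonH, Att], [Att, HonH, HonH], [Att, HonH, HonA]})
      {[HonH], [Att, HonH, Att], [Att, HonH, HonH], [Att, HonH, HonA]}"
    by (rule has_sum_finite) simp
  then show ?thesis
    unfolding sum_eq .
qed

lemma has_sum_won_cycles:
  "((\<lambda>ev. cycle_prob p q \<gamma> ev * real (Delta n\<^sub>1 ev)) has_sum q\<^sup>2 * mean_uncle_dist p q \<gamma> n\<^sub>1 True 2)
    ((\<lambda>t. Att # Att # tree_word t) ` {t. honest_tree t})"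
proof -
  let ?f = "\<lambda>t. q\<^sup>2 * (tree_weight p q \<gamma> True t * real (uncle_dist_sum n\<^sub>1 True 2 t))"
  let ?c = "\<lambda>ev. cycle_prob p q \<gamma> ev * real (Delta n\<^sub>1 ev)"
  have "(?f has_sum q\<^sup>2 * mean_uncle_dist p q \<gamma> n\<^sub>1 True 2) UNIV"
    unfolding mean_uncle_dist_def
    by (intro has_sum_cmult_right has_sum_infsum summable_uncle_dist q_pos q_less_p p_plus_q \<gamma>_nonneg \<gamma>_le_1)
  also have "?this \<longleftrightarrow> (?f has_sum q\<^sup>2 * mean_uncle_dist p q \<gamma> n\<^sub>1 True 2) {t. honest_tree t}"
    by (intro has_sum_cong_neutral) (auto simp: tree_weight_eq_0_if_not_honest)
  also have "\<dots> \<longleftrightarrow> ((\<lambda>t. ?c (Att # Att # tree_word t)) has_sum q\<^sup>2 * mean_uncle_dist p q \<gamma> n\<^sub>1 True 2)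
      {t. honest_tree t}"
    by (intro has_sum_cong) (simp add: cycle_prob_SS_tree_word Delta_SS_tree_word)
  finally show ?thesis
    by (simp add: has_sum_reindex[OF inj_on_SS_tree_word] comp_def)
qed

lemma has_sum_expected_Delta:
  assumes "1 \<le> n\<^sub>1"
  shows "((\<lambda>ev. cycle_prob p q \<gamma> ev * real (Delta n\<^sub>1 ev))
    has_sum p * q + q\<^sup>2 * mean_uncle_dist p q \<gamma> n\<^sub>1 True 2) UNIV"
proof -
  let ?c = "\<lambda>ev. cycle_prob p q \<gamma> ev * real (Delta n\<^sub>1 ev)"
  let ?short = "{[HonH], [Att, HonH, Att], [Att, HonH, HonH], [Att, HonH, HonA]}"
  let ?won = "(\<lambda>t. Att # Att # tree_word t) ` {t. honest_tree t}"
  have "?short \<inter> ?won = {}"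
    by auto
  then have "(?c has_sum p * q + q\<^sup>2 * mean_uncle_dist p q \<gamma> n\<^sub>1 True 2) (?short \<union> ?won)"
    by (intro has_sum_Un_disjoint has_sum_short_cycles has_sum_won_cycles assms)
  moreover have "(?c has_sum s) (?short \<union> ?won) \<longleftrightarrow> (?c has_sum s) UNIV" for s
  proof (rule has_sum_cong_neutral)
    fix ev
    assume "ev \<in> UNIV - (?short \<union> ?won)"
    then have "cycle_prob p q \<gamma> ev = 0"
      using cycle_prob_nonzero_cases[of p q \<gamma> ev] by blast
    then show "?c ev = 0"
      by simp
  qed auto
  ultimately show ?thesis
    by blast
qed

lemma expected_Delta_closed_form:
  assumes "1 \<le> n\<^sub>1"
  shows "p * q + q\<^sup>2 * mean_uncle_dist p q \<gamma> n\<^sub>1 True 2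
    = p * q + (p * q^2 * \<gamma> / (p - q)^2) *
        (2 * p - q - (p + real n\<^sub>1 * (p - q)) * (q / p) ^ (n\<^sub>1 - 1))
      + ((1 - \<gamma>) * q / p) * (q * (1 + p) - (1 + real n\<^sub>1 * p) * q ^ n\<^sub>1)"
proof -
  obtain m where n\<^sub>1: "n\<^sub>1 = Suc m"
    using assms by (cases n\<^sub>1) auto
  have p_pos: "0 < p"
    using q_pos q_less_p by simp
  define X where "X = q * (1 + p) - (1 + real n\<^sub>1 * p) * q ^ n\<^sub>1"
  define Y where "Y = 2 * p - q - (p + real n\<^sub>1 * (p - q)) * (q / p) ^ (n\<^sub>1 - 1)"
  have "q\<^sup>2 * mean_uncle_dist p q \<gamma> n\<^sub>1 True 2
      = (1 - \<gamma>) * (q\<^sup>2 * p * weighted_power_sum q 2 (Suc m))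
        + \<gamma> * (q\<^sup>2 * weighted_power_sum (q / p) 2 (Suc m))"
    unfolding mean_uncle_dist_True[OF q_pos q_less_p p_plus_q \<gamma>_nonneg \<gamma>_le_1] n\<^sub>1
    by (simp add: algebra_simps)
  also have "\<dots> = (1 - \<gamma>) * (q / p * X) + \<gamma> * (p * q\<^sup>2 / (p - q)\<^sup>2 * Y)"
    using q_less_p
    by (simp add: X_def Y_def n\<^sub>1 weighted_power_sum_q_closed_form[OF p_pos p_plus_q]
        weighted_power_sum_ratio_closed_form[OF p_pos])
  finally show ?thesis
    unfolding X_def[symmetric] Y_def[symmetric] by (simp add: ac_simps times_divide_eq_left)
qed

end

theorem proposition11:
  fixes p q \<gamma> :: real and n\<^sub>1 :: nat
  assumes "0 < q" and "q < p" and "p + q = 1"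
    and "0 \<le> \<gamma>" and "\<gamma> \<le> 1" and "2 \<le> n\<^sub>1"
  shows "((\<lambda>ev. cycle_prob p q \<gamma> ev * real (Delta n\<^sub>1 ev)) has_sum
           (p * q + (p * q^2 * \<gamma> / (p - q)^2) *
              (2 * p - q - (p + real n\<^sub>1 * (p - q)) * (q / p) ^ (n\<^sub>1 - 1))
            + ((1 - \<gamma>) * q / p) * (q * (1 + p) - (1 + real n\<^sub>1 * p) * q ^ n\<^sub>1))) UNIV"
proof -
  have n\<^sub>1: "1 \<le> n\<^sub>1"
    using assms(6) by simp
  have "((\<lambda>ev. cycle_prob p q \<gamma> ev * real (Delta n\<^sub>1 ev))
      has_sum p * q + q\<^sup>2 * mean_uncle_dist p q \<gamma> n\<^sub>1 True 2) UNIV"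
    by (rule has_sum_expected_Delta[OF assms(1-5) n\<^sub>1])
  also have "p * q + q\<^sup>2 * mean_uncle_dist p q \<gamma> n\<^sub>1 True 2
      = p * q + (p * q^2 * \<gamma> / (p - q)^2) *
          (2 * p - q - (p + real n\<^sub>1 * (p - q)) * (q / p) ^ (n\<^sub>1 - 1))
        + ((1 - \<gamma>) * q / p) * (q * (1 + p) - (1 + real n\<^sub>1 * p) * q ^ n\<^sub>1)"
    by (rule expected_Delta_closed_form[OF assms(1-5) n\<^sub>1])
  finally show ?thesis .
qed

end
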